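(* Let ${\bm{x}}^1,\dots,{\bm{x}}^M\in\mathbb{R}^d$ (one data point per client, i.e. $n=1$) satisfy $\|{\bm{x}}^m\|\le1$ and be linearly separable with maximum margin $\gamma=\max_{\|{\bm{w}}\|=1}\min_m\langle{\bm{w}},{\bm{x}}^m\rangle>0$. Let $\ell(z)=\log(1+e^{-z})$, $F_m({\bm{w}})=\ell(\langle{\bm{w}},{\bm{x}}^m\rangle)$. Run Local GD with stepsize $\eta>0$ and $K\in\mathbb{N}$ local steps: ${\bm{w}}_{r,0}^m={\bm{w}}_r$, ${\bm{w}}_{r,k+1}^m={\bm{w}}_{r,k}^m-\eta\nabla F_m({\bm{w}}_{r,k}^m)$ ($k=0,\dots,K-1$). Define $$\beta_r^m=\frac1K\sum_{k=0}^{K-1}\frac{|\ell'(\langle{\bm{w}}_{r,k}^m,{\bm{x}}^m\rangle)|}{|\ell'(\langle{\bm{w}}_r,{\bm{x}}^m\rangle)|}.$$ Suppose ${\bm{w}}_r={\bm{0}}$. Then $\beta_r^m\le\mathcal O\left(\frac1K+\frac1{\eta\gamma^2K}\log(1+\eta\gamma^2K)\right)$, and if additionally $\eta\ge1$, then $\beta_r^m\le\widetilde{\mathcal O}\left(\frac1K\left(1+\frac1{\gamma^2}\right)\right)$.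
   Context: $\mathcal O$ hides universal constants only; $\widetilde{\mathcal O}$ hides universal constants and logarithmic factors. Linear separability means there is ${\bm{w}}$ with $\langle{\bm{w}},{\bm{x}}^m\rangle>0$ for all $m$ (labels absorbed into data). *)

theory Defs
  imports "HOL-Analysis.Analysis"
begin

text \<open>Vectors in R^d are represented as functions nat => real; only the
coordinates 0..d-1 are used. This lets the dimension d be quantified
inside the statement (so the hidden constants are uniform in d).\<close>

definition ip :: "nat \<Rightarrow> (nat \<Rightarrow> real) \<Rightarrow> (nat \<Rightarrow> real) \<Rightarrow> real" where
  "ip d u v = (\<Sum>i<d. u i * v i)"

definition vnorm :: "nat \<Rightarrow> (nat \<Rightarrow> real) \<Rightarrow> real" where
  "vnorm d v = sqrt (ip d v v)"

definition logloss :: "real \<Rightarrow> real" where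
  "logloss z = ln (1 + exp (- z))"

definition logloss' :: "real \<Rightarrow> real" where
  "logloss' = deriv logloss"

definition margin :: "nat \<Rightarrow> nat \<Rightarrow> (nat \<Rightarrow> nat \<Rightarrow> real) \<Rightarrow> real" where
  "margin d M xs = (SUP w\<in>{w. vnorm d w = 1}. Min ((\<lambda>m. ip d w (xs m)) ` {..<M}))"

text \<open>Local GD on F_m(w) = logloss(<w,x>) whose gradient is logloss'(<w,x>) x:
  w_{k+1} = w_k - eta * grad F_m(w_k), starting from w0.\<close>
primrec local_iter :: "nat \<Rightarrow> real \<Rightarrow> (nat \<Rightarrow> real) \<Rightarrow> (nat \<Rightarrow> real) \<Rightarrow> nat \<Rightarrow> (nat \<Rightarrow> real)" where
  "local_iter d \<eta> x w0 0 = w0"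
| "local_iter d \<eta> x w0 (Suc k) =
     (\<lambda>i. local_iter d \<eta> x w0 k i - \<eta> * logloss' (ip d (local_iter d \<eta> x w0 k) x) * x i)"

definition beta :: "nat \<Rightarrow> real \<Rightarrow> nat \<Rightarrow> (nat \<Rightarrow> real) \<Rightarrow> (nat \<Rightarrow> real) \<Rightarrow> real" where
  "beta d \<eta> K x w0 = (1 / real K) * (\<Sum>k<K.
      \<bar>logloss' (ip d (local_iter d \<eta> x w0 k) x)\<bar> / \<bar>logloss' (ip d w0 x)\<bar>)"

end

theory Submission
  imports Defs
begin

text \<open>Starting from \<open>w = 0\<close>, only \<open>z\<^sub>k = \<langle>w\<^sub>k, x\<rangle>\<close> matters: since
\<open>\<ell>'(z) = -1/(1 + e\<^sup>z)\<close>, it obeys \<open>z\<^sub>k\<^sub>+\<^sub>1 = z\<^sub>k + a/(1 + e\<^bsup>z\<^sub>k\<^esup>)\<close> with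
\<open>a = \<eta>\<parallel>x\<parallel>\<^sup>2\<close>, and the \<open>k\<close>-th ratio in \<open>\<beta>\<close> is \<open>2/(1 + e\<^bsup>z\<^sub>k\<^esup>)\<close>. From
\<open>e\<^sup>t \<ge> 1 + t\<close> and \<open>e\<^bsup>z\<^sub>k\<^esup> \<ge> 1\<close> we get \<open>e\<^bsup>z\<^sub>k\<^sub>+\<^sub>1\<^esup> \<ge> e\<^bsup>z\<^sub>k\<^esup> + a/2\<close>, so the ratios
are dominated by the harmonic-type sequence \<open>1/(1 + a k/4)\<close>, whose partial sums are
\<open>1 + O(log(1 + a K)/a)\<close>. Finally \<open>\<parallel>x\<^sup>m\<parallel> \<ge> \<gamma>\<close> by Cauchy-Schwarz, so \<open>a\<close> may be
replaced by \<open>\<eta>\<gamma>\<^sup>2\<close>.\<close>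

lemma logloss'_eq: "logloss' z = - 1 / (1 + exp z)"
proof -
  have "(logloss has_real_derivative - exp (- z) / (1 + exp (- z))) (at z)"
    unfolding logloss_def[abs_def] by (auto intro!: derivative_eq_intros simp: add_pos_pos)
  then have "logloss' z = - exp (- z) / (1 + exp (- z))"
    unfolding logloss'_def by (rule DERIV_imp_deriv)
  also have "\<dots> = - 1 / (1 + exp z)"
    by (simp add: exp_minus field_simps add_pos_pos)
  finally show ?thesis .
qed

lemma ip_local_iter_Suc:
  "ip d (local_iter d \<eta> x w0 (Suc k)) x
     = ip d (local_iter d \<eta> x w0 k) x + \<eta> * ip d x x / (1 + exp (ip d (local_iter d \<eta> x w0 k) x))"
  by (simp add: ip_def logloss'_eq algebra_simps sum.distrib sum_distrib_left sum_divide_distrib)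

lemma exp_logistic_recurrence_ge:
  fixes z :: "nat \<Rightarrow> real"
  assumes a: "0 \<le> a" and z0: "z 0 = 0"
    and z_Suc: "\<And>k. z (Suc k) = z k + a / (1 + exp (z k))"
  shows "1 + a * k / 2 \<le> exp (z k)"
proof (induction k)
  case 0
  then show ?case using z0 by simp
next
  case (Suc k)
  define e where "e = exp (z k)"
  have "0 \<le> a * k / 2" using a by simp
  then have e: "1 \<le> e" using Suc.IH unfolding e_def by linarith
  then have "a \<le> a * e" using a by (simp add: mult_le_cancel_left1)
  then have "e + a / 2 \<le> e + a * e / (1 + e)"
    using e by (simp add: field_simps)
  also have "\<dots> = e * (1 + a / (1 + e))"
    using e by (simp add: field_simps)
  also have "\<dots> \<le> e * exp (a / (1 + e))"
    using e exp_ge_add_one_self[of "a / (1 + e)"] by (intro mult_left_mono) simp_all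
  also have "\<dots> = exp (z (Suc k))"
    by (simp add: z_Suc e_def exp_add)
  finally show ?case using Suc.IH unfolding e_def by (simp add: field_simps)
qed

lemma sum_inverse_affine_Suc_le_ln:
  fixes c :: real
  assumes c: "0 < c"
  shows "(\<Sum>k<n. 1 / (1 + c * Suc k)) \<le> ln (1 + c * n) / c"
proof (induction n)
  case 0
  then show ?case by simp
next
  case (Suc n)
  have pos: "0 < 1 + c * n" "0 < 1 + c * Suc n"
    using c by (auto intro: add_pos_nonneg)
  have "ln ((1 + c * n) / (1 + c * Suc n)) \<le> (1 + c * n) / (1 + c * Suc n) - 1"
    using pos by (intro ln_le_minus_one) simp
  then have "c / (1 + c * Suc n) \<le> ln (1 + c * Suc n) - ln (1 + c * n)"
    using pos by (simp add: ln_div field_simps)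
  then have "1 / (1 + c * Suc n) \<le> (ln (1 + c * Suc n) - ln (1 + c * n)) / c"
    using c by (simp add: field_simps)
  with Suc.IH show ?case
    by (simp add: diff_divide_distrib)
qed

lemma sum_inverse_affine_le_ln:
  fixes c :: real and K :: nat
  assumes c: "0 < c"
  shows "(\<Sum>k<K. 1 / (1 + c * k)) \<le> 1 + ln (1 + c * K) / c"
proof (cases K)
  case 0
  then show ?thesis by simp
next
  case (Suc n)
  have "(\<Sum>k<K. 1 / (1 + c * k)) = 1 + (\<Sum>k<n. 1 / (1 + c * Suc k))"
    unfolding Suc sum.lessThan_Suc_shift by simp
  also have "\<dots> \<le> 1 + ln (1 + c * n) / c"
    using sum_inverse_affine_Suc_le_ln[OF c] by simp
  also have "\<dots> \<le> 1 + ln (1 + c * K) / c"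
    using c by (simp add: Suc divide_right_mono add_pos_nonneg)
  finally show ?thesis .
qed

lemma ip_le_vnorm_mult: "ip d u v \<le> vnorm d u * vnorm d v"
proof -
  have "(ip d u v)\<^sup>2 \<le> ip d u u * ip d v v"
    unfolding ip_def using Cauchy_Schwarz_ineq_sum[of u v "{..<d}"] by (simp add: power2_eq_square)
  then have "\<bar>ip d u v\<bar> \<le> sqrt (ip d u u * ip d v v)"
    by (metis power2_abs real_le_rsqrt)
  then show ?thesis by (simp add: vnorm_def real_sqrt_mult)
qed

lemma margin_le_vnorm:
  assumes "m < M" and separable: "\<exists>w. \<forall>j<M. ip d w (xs j) > 0"
  shows "margin d M xs \<le> vnorm d (xs m)"
proof -
  \<comment> \<open>Separability forces \<open>d > 0\<close>; for \<open>d = 0\<close> the unit sphere is empty and the \<open>SUP\<close> is junk.\<close>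
  obtain w where "0 < ip d w (xs m)" using separable \<open>m < M\<close> by blast
  then have "0 < d" by (cases d) (simp_all add: ip_def)
  then have "vnorm d (\<lambda>i. if i = 0 then 1 else 0) = 1"
    by (simp add: vnorm_def ip_def if_distrib sum.If_cases)
  then have sphere_ne: "{w. vnorm d w = 1} \<noteq> {}" by blast
  show ?thesis unfolding margin_def
  proof (rule cSUP_least[OF sphere_ne])
    fix w assume "w \<in> {w. vnorm d w = 1}"
    then have "ip d w (xs m) \<le> vnorm d (xs m)"
      using ip_le_vnorm_mult[of d w "xs m"] by simp
    then show "Min ((\<lambda>m. ip d w (xs m)) ` {..<M}) \<le> vnorm d (xs m)"
      using \<open>m < M\<close> by (meson Min_le finite_imageI finite_lessThan image_eqI lessThan_iff order_trans)
  qed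
qed

lemma beta_zero_le:
  assumes b: "0 < b" "b \<le> \<eta> * ip d x x" and K: "1 \<le> K"
  shows "beta d \<eta> K x (\<lambda>_. 0) \<le> 4 * (1 / K + ln (1 + b * K) / (b * K))"
proof -
  define z where "z k = ip d (local_iter d \<eta> x (\<lambda>_. 0) k) x" for k
  have growth: "1 + \<eta> * ip d x x * k / 2 \<le> exp (z k)" for k
  proof (rule exp_logistic_recurrence_ge)
    show "0 \<le> \<eta> * ip d x x" using b by linarith
    show "z 0 = 0" by (simp add: z_def ip_def)
    show "z (Suc k) = z k + \<eta> * ip d x x / (1 + exp (z k))" for k
      unfolding z_def by (rule ip_local_iter_Suc)
  qed
  have ratio: "\<bar>logloss' (z k)\<bar> / \<bar>logloss' (ip d (\<lambda>_. 0) x)\<bar> \<le> 1 / (1 + b / 4 * k)" for k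
  proof -
    have "b * k \<le> \<eta> * ip d x x * k" using b by (simp add: mult_right_mono)
    then have "2 + b * k / 2 \<le> 1 + exp (z k)" using growth[of k] by linarith
    moreover have "0 < 2 + b * k / 2" using b by (simp add: add_pos_nonneg)
    ultimately have "2 / (1 + exp (z k)) \<le> 2 / (2 + b * k / 2)"
      by (intro divide_left_mono mult_pos_pos) (simp_all add: add_pos_pos)
    also have "\<dots> = 1 / (1 + b / 4 * k)" by (simp add: field_simps)
    finally show ?thesis
      by (simp add: logloss'_eq ip_def abs_div add_pos_pos)
  qed
  have "(\<Sum>k<K. \<bar>logloss' (z k)\<bar> / \<bar>logloss' (ip d (\<lambda>_. 0) x)\<bar>) \<le> (\<Sum>k<K. 1 / (1 + b / 4 * k))"
    by (intro sum_mono ratio)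
  also have "\<dots> \<le> 1 + ln (1 + b / 4 * K) / (b / 4)"
    using b by (intro sum_inverse_affine_le_ln) simp
  also have "\<dots> \<le> 1 + ln (1 + b * K) / (b / 4)"
    using b by (intro add_left_mono divide_right_mono ln_mono) (simp_all add: add_pos_nonneg)
  also have "\<dots> = 1 + 4 * ln (1 + b * K) / b"
    by simp
  finally have "beta d \<eta> K x (\<lambda>_. 0) \<le> 1 / K * (1 + 4 * ln (1 + b * K) / b)"
    unfolding beta_def z_def by (intro mult_left_mono) simp_all
  also have "\<dots> \<le> 1 / K * (4 + 4 * ln (1 + b * K) / b)"
    by (intro mult_left_mono) simp_all
  also have "\<dots> = 4 * (1 / K + ln (1 + b * K) / (b * K))"
    using b K by (simp add: field_simps)
  finally show ?thesis .
qed

lemma margin_sq_le_ip: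
  assumes "m < M" "\<exists>w. \<forall>j<M. ip d w (xs j) > 0" "0 < margin d M xs"
  shows "(margin d M xs)\<^sup>2 \<le> ip d (xs m) (xs m)"
proof -
  have "(margin d M xs)\<^sup>2 \<le> (vnorm d (xs m))\<^sup>2"
    using margin_le_vnorm[OF assms(1,2)] assms(3) by (intro power_mono) simp_all
  also have "\<dots> = ip d (xs m) (xs m)"
    by (simp add: vnorm_def ip_def sum_nonneg)
  finally show ?thesis .
qed

lemma beta_zero_le_margin:
  assumes "m < M" "\<exists>w. \<forall>j<M. ip d w (xs j) > 0" "0 < margin d M xs"
    and "0 < \<eta>" "1 \<le> K"
  defines "b \<equiv> \<eta> * (margin d M xs)\<^sup>2"
  shows "beta d \<eta> K (xs m) (\<lambda>_. 0) \<le> 4 * (1 / K + ln (1 + b * K) / (b * K))"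
proof (rule beta_zero_le)
  show "0 < b" using assms by (simp add: b_def)
  show "b \<le> \<eta> * ip d (xs m) (xs m)"
    using margin_sq_le_ip[OF assms(1-3)] \<open>0 < \<eta>\<close> by (simp add: b_def)
qed fact

lemma beta_zero_le_margin_large_step:
  assumes "m < M" "\<exists>w. \<forall>j<M. ip d w (xs j) > 0" "0 < margin d M xs"
    and "vnorm d (xs m) \<le> 1" and "1 \<le> \<eta>" "1 \<le> K"
  defines "\<gamma> \<equiv> margin d M xs"
  shows "beta d \<eta> K (xs m) (\<lambda>_. 0)
           \<le> 4 * (1 / K) * (1 + 1 / \<gamma>\<^sup>2) * (1 + ln (1 + real K) + ln (1 + 1 / \<gamma>))"
proof -
  have \<gamma>: "0 < \<gamma>" "\<gamma> \<le> 1"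
    using assms margin_le_vnorm[OF assms(1,2)] by (auto simp: \<gamma>_def)
  have "\<gamma>\<^sup>2 \<le> ip d (xs m) (xs m)"
    using margin_sq_le_ip[OF assms(1-3)] by (simp add: \<gamma>_def)
  also have "\<dots> \<le> \<eta> * ip d (xs m) (xs m)"
    using mult_right_mono[OF \<open>1 \<le> \<eta>\<close>, of "ip d (xs m) (xs m)"] by (simp add: ip_def sum_nonneg)
  finally have "beta d \<eta> K (xs m) (\<lambda>_. 0) \<le> 4 * (1 / K + ln (1 + \<gamma>\<^sup>2 * K) / (\<gamma>\<^sup>2 * K))"
    using beta_zero_le \<gamma> \<open>1 \<le> K\<close> by simp
  also have "\<dots> \<le> 4 * (1 / K + ln (1 + real K) / (\<gamma>\<^sup>2 * K))"
    using \<gamma> by (intro mult_left_mono add_left_mono divide_right_mono ln_mono)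
      (simp_all add: power_le_one mult_left_le_one_le add_pos_nonneg)
  also have "\<dots> = 4 * (1 / K) * (1 + 1 / \<gamma>\<^sup>2 * ln (1 + real K))"
    using \<gamma> \<open>1 \<le> K\<close> by (simp add: field_simps)
  also have "\<dots> \<le> 4 * (1 / K) * ((1 + 1 / \<gamma>\<^sup>2) * (1 + ln (1 + real K) + ln (1 + 1 / \<gamma>)))"
  proof (rule mult_left_mono)
    have "0 \<le> ln (1 + real K)" "0 \<le> ln (1 + 1 / \<gamma>)" "0 \<le> 1 / \<gamma>\<^sup>2 * ln (1 + 1 / \<gamma>)"
      using \<gamma> by simp_all
    then show "1 + 1 / \<gamma>\<^sup>2 * ln (1 + real K) \<le> (1 + 1 / \<gamma>\<^sup>2) * (1 + ln (1 + real K) + ln (1 + 1 / \<gamma>))"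
      by (simp add: algebra_simps)
  qed simp
  finally show ?thesis by (simp only: mult.assoc)
qed

theorem lemmaB7:
  shows "(\<exists>C>0. \<forall>d M (xs :: nat \<Rightarrow> nat \<Rightarrow> real) \<eta> (K::nat) m.
            M \<ge> 1 \<longrightarrow> (\<forall>j<M. vnorm d (xs j) \<le> 1) \<longrightarrow>
            (\<exists>w. \<forall>j<M. ip d w (xs j) > 0) \<longrightarrow> margin d M xs > 0 \<longrightarrow>
            \<eta> > 0 \<longrightarrow> K \<ge> 1 \<longrightarrow> m < M \<longrightarrow>
            beta d \<eta> K (xs m) (\<lambda>_. 0)
              \<le> C * (1 / real K + ln (1 + \<eta> * (margin d M xs)\<^sup>2 * real K)
                                   / (\<eta> * (margin d M xs)\<^sup>2 * real K)))
       \<and> (\<exists>C (p::nat). \<forall>d M (xs :: nat \<Rightarrow> nat \<Rightarrow> real) \<eta> (K::nat) m.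
            M \<ge> 1 \<longrightarrow> (\<forall>j<M. vnorm d (xs j) \<le> 1) \<longrightarrow>
            (\<exists>w. \<forall>j<M. ip d w (xs j) > 0) \<longrightarrow> margin d M xs > 0 \<longrightarrow>
            \<eta> \<ge> 1 \<longrightarrow> K \<ge> 1 \<longrightarrow> m < M \<longrightarrow>
            beta d \<eta> K (xs m) (\<lambda>_. 0)
              \<le> C * (1 / real K) * (1 + 1 / (margin d M xs)\<^sup>2)
                  * (1 + ln (1 + real K) + ln (1 + 1 / margin d M xs)) ^ p)"
  by (intro conjI exI[of _ "4::real"] exI[of _ "1::nat"] allI impI zero_less_numeral)
    (blast intro: beta_zero_le_margin,
     simp only: power_one_right, blast intro: beta_zero_le_margin_large_step)

end
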